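(* Let $0<\mathbb{P}_l<\mathbb{P}_u$ and $0<\mathbb{S}_l<\mathbb{S}_u$, and let $P_t$ be a positive integrable random variable (the pool price at time $t$ under the risk-neutral pricing measure, with zero interest rate). For $K>0$ let $\mathbf{C}(K)=\mathbb{E}[(P_t-K)^+]$ and $\mathbf{P}(K)=\mathbb{E}[(K-P_t)^+]$ be the European call and put prices with maturity $t$ and strike $K$. With $\mathrm{UIL}^{\mathtt{R}}$ and $\mathrm{UIL}^{\mathtt{L}}$ as defined in the context, $$\mathbb{E}[\mathrm{UIL}^{\mathtt{R}}]=-\tfrac12\int_{\mathbb{P}_l}^{\mathbb{P}_u}K^{-3/2}\mathbf{C}(K)\,\mathrm{d}K,\qquad \mathbb{E}[\mathrm{UIL}^{\mathtt{L}}]=-\tfrac12\int_{\mathbb{S}_l}^{\mathbb{S}_u}K^{-3/2}\mathbf{P}(K)\,\mathrm{d}K.$$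
   Context: Unit impermanent losses per liquidity for the exit price $P_t$: $\mathrm{UIL}^{\mathtt{R}}=\big(2\sqrt{P_t}-\tfrac{P_t}{\sqrt{\mathbb{P}_l}}-\sqrt{\mathbb{P}_l}\big)\mathbf{1}_{\{\mathbb{P}_l\le P_t\le \mathbb{P}_u\}}+\big(\sqrt{\mathbb{P}_u}-\sqrt{\mathbb{P}_l}-(\tfrac{1}{\sqrt{\mathbb{P}_l}}-\tfrac{1}{\sqrt{\mathbb{P}_u}})P_t\big)\mathbf{1}_{\{P_t\ge \mathbb{P}_u\}}$ (liquidity supplied on the interval $[\mathbb{P}_l,\mathbb{P}_u]$ to the right of the initial price), and $\mathrm{UIL}^{\mathtt{L}}=\big(2\sqrt{P_t}-\tfrac{P_t}{\sqrt{\mathbb{S}_u}}-\sqrt{\mathbb{S}_u}\big)\mathbf{1}_{\{\mathbb{S}_l\le P_t\le \mathbb{S}_u\}}+\big((\tfrac{1}{\sqrt{\mathbb{S}_l}}-\tfrac{1}{\sqrt{\mathbb{S}_u}})P_t-\sqrt{\mathbb{S}_u}+\sqrt{\mathbb{S}_l}\big)\mathbf{1}_{\{P_t\le \mathbb{S}_l\}}$ (liquidity supplied on $[\mathbb{S}_l,\mathbb{S}_u]$ to the left of the initial price). Here $y^+=\max(y,0)$. *)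

theory Defs
  imports "HOL-Probability.Probability"
begin

text \<open>Unit impermanent loss, liquidity on [Pl, Pu] to the right of the initial price.
  Written piecewise; the two branches agree at p = Pu.\<close>
definition UIL_R :: "real \<Rightarrow> real \<Rightarrow> real \<Rightarrow> real" where
  "UIL_R Pl Pu p =
     (if Pl \<le> p \<and> p \<le> Pu then 2 * sqrt p - p / sqrt Pl - sqrt Pl
      else if p \<ge> Pu then sqrt Pu - sqrt Pl - (1 / sqrt Pl - 1 / sqrt Pu) * p
      else 0)"

definition UIL_L :: "real \<Rightarrow> real \<Rightarrow> real \<Rightarrow> real" where
  "UIL_L Sl Su p =
     (if Sl \<le> p \<and> p \<le> Su then 2 * sqrt p - p / sqrt Su - sqrt Su
      else if p \<le> Sl then (1 / sqrt Sl - 1 / sqrt Su) * p - sqrt Su + sqrt Sl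
      else 0)"

definition call_price :: "'a measure \<Rightarrow> ('a \<Rightarrow> real) \<Rightarrow> real \<Rightarrow> real" where
  "call_price M P K = (\<integral>x. max (P x - K) 0 \<partial>M)"

definition put_price :: "'a measure \<Rightarrow> ('a \<Rightarrow> real) \<Rightarrow> real \<Rightarrow> real" where
  "put_price M P K = (\<integral>x. max (K - P x) 0 \<partial>M)"

end

(* For a fixed exit price p, the function K \<mapsto> K^(-3/2) (p - K) has the primitive
   -2 p / sqrt K - 2 sqrt K.  Integrating K^(-3/2) (p - K)^+ over the strike interval
   therefore stops at the price clamped to the interval, and the result is -2 UIL^R(p);
   since (K - p)^+ = (p - K)^+ - (p - K), the put integral gives -2 UIL^L(p) in the same way.
   These pathwise identities hold for every real p.
   Taking expectations and exchanging them with the strike integral by Fubini, which is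
   legitimate because the integrand is bounded by an affine function of |P|, yields the
   theorem. *)
theory Submission
  imports Defs
begin

definition payoff_primitive :: "real \<Rightarrow> real \<Rightarrow> real" where
  "payoff_primitive p K = - 2 * (p / sqrt K) - 2 * sqrt K"

lemma powr_minus_three_halves:
  fixes K :: real
  assumes "0 < K"
  shows "K powr (-3/2) = 1 / (K * sqrt K)"
proof -
  have "K powr (3/2) = K powr (1 + 1/2)"
    by simp
  also have "\<dots> = K * sqrt K"
    using assms by (simp only: powr_add powr_one) (simp add: powr_half_sqrt)
  finally show ?thesis
    by (simp add: powr_minus_divide)
qed

lemma has_real_derivative_payoff_primitive:
  assumes "0 < K"
  shows "(payoff_primitive p has_real_derivative K powr (-3/2) * (p - K)) (at K)"
proof -
  have "(payoff_primitive p has_real_derivative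
          p / (K * sqrt K) - 1 / sqrt K) (at K)"
    unfolding payoff_primitive_def using assms
    by (auto intro!: derivative_eq_intros simp: field_simps)
  also have "p / (K * sqrt K) - 1 / sqrt K = K powr (-3/2) * (p - K)"
    using assms by (simp only: powr_minus_three_halves[OF assms]) (simp add: field_simps)
  finally show ?thesis .
qed

lemma has_integral_weighted_forward_payoff:
  assumes "0 < a" and "a \<le> b"
  shows "((\<lambda>K. K powr (-3/2) * (p - K)) has_integral
           payoff_primitive p b - payoff_primitive p a) {a..b}"
proof (rule fundamental_theorem_of_calculus[OF \<open>a \<le> b\<close>])
  fix K assume "K \<in> {a..b}"
  then have "0 < K"
    using \<open>0 < a\<close> by auto
  then show "(payoff_primitive p has_vector_derivative K powr (-3/2) * (p - K))
               (at K within {a..b})"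
    unfolding has_real_derivative_iff_has_vector_derivative[symmetric]
    by (rule has_field_derivative_at_within[OF has_real_derivative_payoff_primitive])
qed

lemma has_integral_weighted_call_payoff:
  fixes a b p :: real
  assumes "0 < a" and "a \<le> b"
  defines "m \<equiv> max a (min b p)"
  shows "((\<lambda>K. K powr (-3/2) * max (p - K) 0) has_integral
           payoff_primitive p m - payoff_primitive p a) {a..b}"
proof -
  have "a \<le> m" "m \<le> b"
    using assms by auto
  have "((\<lambda>K. K powr (-3/2) * max (p - K) 0) has_integral
           payoff_primitive p m - payoff_primitive p a) {a..m}"
  proof (rule has_integral_spike_finite[of "{a, m}"])
    show "K powr (-3/2) * max (p - K) 0 = K powr (-3/2) * (p - K)" if "K \<in> {a..m} - {a, m}" for K
      using that by (auto simp: m_def)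
  qed (use has_integral_weighted_forward_payoff[OF \<open>0 < a\<close> \<open>a \<le> m\<close>] in auto)
  moreover have "((\<lambda>K. K powr (-3/2) * max (p - K) 0) has_integral 0) {m..b}"
  proof (rule has_integral_spike_finite[of "{m, b}"])
    show "K powr (-3/2) * max (p - K) 0 = 0" if "K \<in> {m..b} - {m, b}" for K
      using that by (auto simp: m_def)
  qed auto
  ultimately show ?thesis
    using has_integral_combine[OF \<open>a \<le> m\<close> \<open>m \<le> b\<close>] by fastforce
qed

lemma has_integral_weighted_put_payoff:
  fixes a b p :: real
  assumes "0 < a" and "a \<le> b"
  defines "m \<equiv> max a (min b p)"
  shows "((\<lambda>K. K powr (-3/2) * max (K - p) 0) has_integral
           payoff_primitive p m - payoff_primitive p b) {a..b}"
proof -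
  have parity: "K powr (-3/2) * max (K - p) 0
      = K powr (-3/2) * max (p - K) 0 - K powr (-3/2) * (p - K)" for K
    by (simp add: max_def algebra_simps)
  show ?thesis
    using has_integral_diff[OF has_integral_weighted_call_payoff[OF assms(1,2), where p = p]
        has_integral_weighted_forward_payoff[OF assms(1,2), where p = p]]
    unfolding parity m_def by simp
qed

lemma UIL_R_eq_payoff_primitive:
  assumes "0 < a" and "a \<le> b"
  shows "- 2 * UIL_R a b p = payoff_primitive p (max a (min b p)) - payoff_primitive p a"
proof -
  consider "p < a" | "a \<le> p" "p \<le> b" | "b < p"
    by linarith
  then show ?thesis
    using assms by cases (auto simp: UIL_R_def payoff_primitive_def real_div_sqrt algebra_simps)
qed

lemma UIL_L_eq_payoff_primitive:
  assumes "0 < a" and "a \<le> b"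
  shows "- 2 * UIL_L a b p = payoff_primitive p (max a (min b p)) - payoff_primitive p b"
proof -
  consider "p < a" | "a \<le> p" "p \<le> b" | "b < p"
    by linarith
  then show ?thesis
    using assms by cases (auto simp: UIL_L_def payoff_primitive_def real_div_sqrt algebra_simps)
qed

lemma set_borel_integral_eq_has_integral_Icc:
  fixes f :: "real \<Rightarrow> real"
  assumes "continuous_on {a..b} f" and "(f has_integral I) {a..b}"
  shows "(LBINT x:{a..b}. f x) = I"
  using set_borel_integral_eq_integral(2)[OF borel_integrable_atLeastAtMost'[OF assms(1)]]
    integral_unique[OF assms(2)] by simp

lemma set_integral_weighted_call_payoff:
  assumes "0 < a" and "a \<le> b"
  shows "(LBINT K:{a..b}. K powr (-3/2) * max (p - K) 0) = - 2 * UIL_R a b p"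
proof (rule set_borel_integral_eq_has_integral_Icc)
  show "continuous_on {a..b} (\<lambda>K. K powr (-3/2) * max (p - K) 0)"
    using assms by (intro continuous_intros) auto
  show "((\<lambda>K. K powr (-3/2) * max (p - K) 0) has_integral - 2 * UIL_R a b p) {a..b}"
    unfolding UIL_R_eq_payoff_primitive[OF assms] by (rule has_integral_weighted_call_payoff[OF assms])
qed

lemma set_integral_weighted_put_payoff:
  assumes "0 < a" and "a \<le> b"
  shows "(LBINT K:{a..b}. K powr (-3/2) * max (K - p) 0) = - 2 * UIL_L a b p"
proof (rule set_borel_integral_eq_has_integral_Icc)
  show "continuous_on {a..b} (\<lambda>K. K powr (-3/2) * max (K - p) 0)"
    using assms by (intro continuous_intros) auto
  show "((\<lambda>K. K powr (-3/2) * max (K - p) 0) has_integral - 2 * UIL_L a b p) {a..b}"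
    unfolding UIL_L_eq_payoff_primitive[OF assms] by (rule has_integral_weighted_put_payoff[OF assms])
qed

lemma set_integral_expectation_swap:
  fixes f :: "real \<Rightarrow> real \<Rightarrow> real" and P :: "'a \<Rightarrow> real"
  assumes "finite_measure M" and "integrable M P"
    and f_measurable: "case_prod f \<in> borel_measurable (borel \<Otimes>\<^sub>M borel)"
    and f_bound: "\<And>p K. K \<in> {a..b} \<Longrightarrow> \<bar>f p K\<bar> \<le> c * \<bar>p\<bar> + d"
  shows "(LBINT K:{a..b}. \<integral>x. f (P x) K \<partial>M) = (\<integral>x. (LBINT K:{a..b}. f (P x) K) \<partial>M)"
proof -
  interpret finite_measure M by fact
  interpret pair_sigma_finite M lborel ..
  have [measurable]: "P \<in> borel_measurable M"
    using \<open>integrable M P\<close> by auto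
  define g where "g x K = indicator {a..b} K * (c * \<bar>P x\<bar> + d)" for x K
  define h where "h x K = indicator {a..b} K * f (P x) K" for x K
  have g_integrable: "integrable (M \<Otimes>\<^sub>M lborel) (case_prod g)"
  proof (rule Fubini_integrable)
    show "case_prod g \<in> borel_measurable (M \<Otimes>\<^sub>M lborel)"
      unfolding g_def by measurable
    have "(\<integral>K. norm (g x K) \<partial>lborel) = measure lborel {a..b} * \<bar>c * \<bar>P x\<bar> + d\<bar>" for x
      by (simp add: g_def abs_mult)
    then show "integrable M (\<lambda>x. \<integral>K. norm (case_prod g (x, K)) \<partial>lborel)"
      using \<open>integrable M P\<close> by simp
    show "AE x in M. integrable lborel (\<lambda>K. case_prod g (x, K))"
      by (simp add: g_def emeasure_lborel_Icc_eq)
  qed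
  have h_integrable: "integrable (M \<Otimes>\<^sub>M lborel) (case_prod h)"
  proof (rule Bochner_Integration.integrable_bound[OF g_integrable])
    show "case_prod h \<in> borel_measurable (M \<Otimes>\<^sub>M lborel)"
      unfolding h_def using f_measurable by measurable
    have "\<bar>h x K\<bar> \<le> \<bar>g x K\<bar>" for x K
      using f_bound[of K "P x"] by (auto simp: h_def g_def indicator_def)
    then show "AE z in M \<Otimes>\<^sub>M lborel. norm (case_prod h z) \<le> norm (case_prod g z)"
      by (intro AE_I2) (auto split: prod.split)
  qed
  show ?thesis
    using Fubini_integral[OF h_integrable]
    by (simp add: set_lebesgue_integral_def h_def)
qed

lemma abs_powr_weight_le:
  fixes a b K p y :: real
  assumes "0 < a" and "a \<le> K" and "\<bar>y\<bar> \<le> \<bar>p\<bar> + b"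
  shows "\<bar>K powr (-3/2) * y\<bar> \<le> a powr (-3/2) * \<bar>p\<bar> + a powr (-3/2) * b"
proof -
  have "K powr (-3/2) \<le> a powr (-3/2)"
    using assms by (intro powr_mono2') auto
  then have "K powr (-3/2) * \<bar>y\<bar> \<le> a powr (-3/2) * (\<bar>p\<bar> + b)"
    using assms by (intro mult_mono) auto
  then show ?thesis
    by (simp add: abs_mult distrib_left)
qed

lemma expected_UIL_R:
  assumes "finite_measure M" and "integrable M P" and "0 < a" and "a \<le> b"
  shows "(\<integral>x. UIL_R a b (P x) \<partial>M) = - 1/2 * (LBINT K:{a..b}. K powr (-3/2) * call_price M P K)"
proof -
  have "(LBINT K:{a..b}. K powr (-3/2) * call_price M P K)
      = (LBINT K:{a..b}. \<integral>x. K powr (-3/2) * max (P x - K) 0 \<partial>M)"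
    by (simp add: call_price_def)
  also have "\<dots> = (\<integral>x. (LBINT K:{a..b}. K powr (-3/2) * max (P x - K) 0) \<partial>M)"
    using assms
    by (intro set_integral_expectation_swap[where c = "a powr (-3/2)" and d = "a powr (-3/2) * b"]
        abs_powr_weight_le) auto
  also have "\<dots> = (\<integral>x. - 2 * UIL_R a b (P x) \<partial>M)"
    using set_integral_weighted_call_payoff[OF assms(3,4)] by simp
  finally show ?thesis
    by simp
qed

lemma expected_UIL_L:
  assumes "finite_measure M" and "integrable M P" and "0 < a" and "a \<le> b"
  shows "(\<integral>x. UIL_L a b (P x) \<partial>M) = - 1/2 * (LBINT K:{a..b}. K powr (-3/2) * put_price M P K)"
proof -
  have "(LBINT K:{a..b}. K powr (-3/2) * put_price M P K)
      = (LBINT K:{a..b}. \<integral>x. K powr (-3/2) * max (K - P x) 0 \<partial>M)"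
    by (simp add: put_price_def)
  also have "\<dots> = (\<integral>x. (LBINT K:{a..b}. K powr (-3/2) * max (K - P x) 0) \<partial>M)"
    using assms
    by (intro set_integral_expectation_swap[where c = "a powr (-3/2)" and d = "a powr (-3/2) * b"]
        abs_powr_weight_le) auto
  also have "\<dots> = (\<integral>x. - 2 * UIL_L a b (P x) \<partial>M)"
    using set_integral_weighted_put_payoff[OF assms(3,4)] by simp
  finally show ?thesis
    by simp
qed

theorem proposition2:
  fixes M :: "'a measure" and P :: "'a \<Rightarrow> real" and Pl Pu Sl Su :: real
  assumes "prob_space M"
    and "integrable M P"
    and "\<forall>x\<in>space M. 0 < P x"
    and "0 < Pl" and "Pl < Pu"
    and "0 < Sl" and "Sl < Su"
  shows "(\<integral>x. UIL_R Pl Pu (P x) \<partial>M)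
           = - 1/2 * (LBINT K:{Pl..Pu}. K powr (-3/2) * call_price M P K)
         \<and> (\<integral>x. UIL_L Sl Su (P x) \<partial>M)
           = - 1/2 * (LBINT K:{Sl..Su}. K powr (-3/2) * put_price M P K)"
proof -
  have "finite_measure M"
    using \<open>prob_space M\<close> by (rule prob_space.finite_measure)
  then show ?thesis
    using assms by (simp add: expected_UIL_R expected_UIL_L)
qed

end
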